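(* Let $F\colon(-\varepsilon,\varepsilon)\times M^n\to\mathbb{R}^{n+1}$ be a conformal infinitesimal variation of an isometric immersion $f\colon M^n\to\mathbb{R}^{n+1}$ with conformal factor $\rho$. Let $N_t$ be a unit normal vector field to $f_t=F(t,\cdot)$ (depending smoothly on $t$), $A_t$ the corresponding shape operator, $A=A_0$ and $A'=\frac{\partial}{\partial t}|_{t=0}A_t$. Then the tensor $\mathcal{B}$ associated with $F$ satisfies $\mathcal{B}=A'+\rho A$.
   Context: Conformal infinitesimal variation: $f_t$ immersions, $f_0=f$, positive $\gamma$ with $\gamma(0,\cdot)=1$ and $\frac{\partial}{\partial t}|_{t=0}(\gamma\langle f_{t*}X,f_{t*}Y\rangle)=0$; its variational field $\mathcal{T}=F_*\partial_t|_{t=0}$ satisfies $\langle\tilde\nabla_X\mathcal{T},f_*Y\rangle+\langle f_*X,\tilde\nabla_Y\mathcal{T}\rangle=2\rho\langle X,Y\rangle$ with $\rho=-\frac12\partial_t\gamma(0,\cdot)$. With $\alpha$ the second fundamental form of $f$ and $N=N_0$, $\beta(X,Y)=(\tilde\nabla_X\tilde\nabla_Y\mathcal{T}-\tilde\nabla_{\nabla_XY}\mathcal{T})_{N_fM}-\rho\alpha(X,Y)$, and $\mathcal{B}\in\Gamma(\mathrm{End}(TM))$ is defined by $\langle\mathcal{B}X,Y\rangle=\langle\beta(X,Y),N\rangle$. *)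

theory Defs
  imports "HOL-Analysis.Analysis"
begin

text \<open>Local (chart) model: the manifold M^n is represented by an open set U of real^'n
  (coordinates), the hypersurface lives in real^'m with CARD('m) = CARD('n) + 1.\<close>

fun Ck_on :: "nat \<Rightarrow> 'a::euclidean_space set \<Rightarrow> ('a \<Rightarrow> 'b::real_normed_vector) \<Rightarrow> bool" where
  "Ck_on 0 S f = continuous_on S f"
| "Ck_on (Suc k) S f = (f differentiable_on S \<and>
      (\<forall>b\<in>Basis. Ck_on k S (\<lambda>x. frechet_derivative f (at x) b)))"

definition smooth_on :: "'a::euclidean_space set \<Rightarrow> ('a \<Rightarrow> 'b::real_normed_vector) \<Rightarrow> bool" where
  "smooth_on S f = (\<forall>k. Ck_on k S f)"

definition pd :: "'n::finite \<Rightarrow> (real^'n \<Rightarrow> 'b::real_normed_vector) \<Rightarrow> real^'n \<Rightarrow> 'b" where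
  "pd i g x = frechet_derivative g (at x) (axis i 1)"

definition dt0 :: "(real \<Rightarrow> 'b::real_normed_vector) \<Rightarrow> 'b" where
  "dt0 h = vector_derivative h (at 0)"

definition immersion_on :: "(real^'n) set \<Rightarrow> (real^'n::finite \<Rightarrow> real^'m::finite) \<Rightarrow> bool" where
  "immersion_on U f = (open U \<and> smooth_on U f \<and>
      (\<forall>x\<in>U. inj (frechet_derivative f (at x))))"

definition metric :: "(real^'n::finite \<Rightarrow> real^'m::finite) \<Rightarrow> real^'n \<Rightarrow> real^'n^'n" where
  "metric f x = (\<chi> i j. pd i f x \<bullet> pd j f x)"

definition metric_inv :: "(real^'n::finite \<Rightarrow> real^'m::finite) \<Rightarrow> real^'n \<Rightarrow> real^'n^'n" where
  "metric_inv f x = matrix_inv (metric f x)"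

definition unit_normal_on :: "(real^'n) set \<Rightarrow> (real^'n::finite \<Rightarrow> real^'m::finite) \<Rightarrow> (real^'n \<Rightarrow> real^'m) \<Rightarrow> bool" where
  "unit_normal_on U f N = (\<forall>x\<in>U. norm (N x) = 1 \<and> (\<forall>i. N x \<bullet> pd i f x = 0))"

text \<open>Shape operator A (w.r.t. unit normal N) as a matrix in the coordinate frame:
  A d_j = sum_k A$k$j d_k, with <A d_j, d_l> = - <d_j N, f_* d_l>, i.e. A X = -(d N X)^T.\<close>
definition shape_op :: "(real^'n::finite \<Rightarrow> real^'m::finite) \<Rightarrow> (real^'n \<Rightarrow> real^'m) \<Rightarrow> real^'n \<Rightarrow> real^'n^'n" where
  "shape_op f N x = (\<chi> k j. \<Sum>l\<in>UNIV. metric_inv f x $ k $ l * (- (pd j N x \<bullet> pd l f x)))"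

text \<open>Christoffel symbols of the induced metric: nabla_{d_i} d_j = sum_k Gamma k i j d_k.\<close>
definition christoffel :: "(real^'n::finite \<Rightarrow> real^'m::finite) \<Rightarrow> real^'n \<Rightarrow> 'n \<Rightarrow> 'n \<Rightarrow> 'n \<Rightarrow> real" where
  "christoffel f x k i j = (\<Sum>l\<in>UNIV. metric_inv f x $ k $ l * (pd i (pd j f) x \<bullet> pd l f x))"

definition sff :: "(real^'n::finite \<Rightarrow> real^'m::finite) \<Rightarrow> (real^'n \<Rightarrow> real^'m) \<Rightarrow> real^'n \<Rightarrow> 'n \<Rightarrow> 'n \<Rightarrow> real^'m" where
  "sff f N x i j = (pd i (pd j f) x \<bullet> N x) *\<^sub>R N x"

definition beta_tensor :: "(real^'n::finite \<Rightarrow> real^'m::finite) \<Rightarrow> (real^'n \<Rightarrow> real^'m) \<Rightarrow> (real^'n \<Rightarrow> real^'m)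
    \<Rightarrow> (real^'n \<Rightarrow> real) \<Rightarrow> real^'n \<Rightarrow> 'n \<Rightarrow> 'n \<Rightarrow> real^'m" where
  "beta_tensor f N T \<rho> x i j =
     (((pd i (pd j T) x - (\<Sum>k\<in>UNIV. christoffel f x k i j *\<^sub>R pd k T x)) \<bullet> N x) *\<^sub>R N x)
     - \<rho> x *\<^sub>R sff f N x i j"

text \<open>The endomorphism B with <B X, Y> = <beta(X,Y), N>, as a matrix in the coordinate frame:
  B d_i = sum_k B$k$i d_k.\<close>
definition B_tensor :: "(real^'n::finite \<Rightarrow> real^'m::finite) \<Rightarrow> (real^'n \<Rightarrow> real^'m) \<Rightarrow> (real^'n \<Rightarrow> real^'m)
    \<Rightarrow> (real^'n \<Rightarrow> real) \<Rightarrow> real^'n \<Rightarrow> real^'n^'n" where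
  "B_tensor f N T \<rho> x = (\<chi> k i. \<Sum>j\<in>UNIV. metric_inv f x $ k $ j * (beta_tensor f N T \<rho> x i j \<bullet> N x))"

definition conformal_inf_variation ::
  "real \<Rightarrow> (real^'n) set \<Rightarrow> (real^'n::finite \<Rightarrow> real^'m::finite) \<Rightarrow> (real \<Rightarrow> real^'n \<Rightarrow> real^'m)
     \<Rightarrow> (real \<Rightarrow> real^'n \<Rightarrow> real) \<Rightarrow> bool" where
  "conformal_inf_variation \<epsilon> U f F \<gamma> =
     (0 < \<epsilon> \<and> open U \<and>
      smooth_on ({-\<epsilon><..<\<epsilon>} \<times> U) (\<lambda>(t,x). F t x) \<and>
      smooth_on ({-\<epsilon><..<\<epsilon>} \<times> U) (\<lambda>(t,x). \<gamma> t x) \<and>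
      (\<forall>t\<in>{-\<epsilon><..<\<epsilon>}. immersion_on U (F t)) \<and>
      (\<forall>x\<in>U. F 0 x = f x) \<and>
      (\<forall>t\<in>{-\<epsilon><..<\<epsilon>}. \<forall>x\<in>U. 0 < \<gamma> t x) \<and>
      (\<forall>x\<in>U. \<gamma> 0 x = 1) \<and>
      (\<forall>x\<in>U. \<forall>i j. dt0 (\<lambda>t. \<gamma> t x * (pd i (F t) x \<bullet> pd j (F t) x)) = 0))"

end

theory Submission
  imports Defs
begin

text \<open>Write \<open>g\<^sub>t\<close> for the metric of \<open>f\<^sub>t\<close> and \<open>h\<^sub>t = (\<langle>N\<^sub>t, \<partial>\<^sub>j\<partial>\<^sub>l f\<^sub>t\<rangle>)\<close>, so that
  \<open>A\<^sub>t = g\<^sub>t\<^sup>-\<^sup>1 h\<^sub>t\<close> by the Weingarten formula. Conformality of the variation means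
  \<open>(\<gamma> g\<^sub>t)' = 0\<close>, i.e. \<open>g' = 2\<rho> g\<close>, hence \<open>(g\<^sup>-\<^sup>1)' = -2\<rho> g\<^sup>-\<^sup>1\<close> and \<open>A' = -2\<rho> A + g\<^sup>-\<^sup>1 h'\<close>.
  On the other side, \<open>\<langle>\<beta>(\<partial>\<^sub>i,\<partial>\<^sub>j), N\<rangle> = h'\<^sub>i\<^sub>j - \<rho> h\<^sub>i\<^sub>j\<close>: the normal part of \<open>\<partial>\<^sub>i\<partial>\<^sub>j T\<close> is
  \<open>\<langle>N, \<partial>\<^sub>t\<partial>\<^sub>i\<partial>\<^sub>j f\<^sub>t\<rangle>\<close> by symmetry of mixed partials, and the Christoffel term equals
  \<open>\<langle>N', \<partial>\<^sub>i\<partial>\<^sub>j f\<rangle>\<close> by the Gauss formula, because \<open>\<langle>\<partial>\<^sub>m T, N\<rangle> = -\<langle>N', \<partial>\<^sub>m f\<rangle>\<close> and \<open>N'\<close> is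
  tangent. Hence \<open>\<B> = g\<^sup>-\<^sup>1 (h' - \<rho> h) = A' + \<rho> A\<close>.\<close>

section \<open>Directional derivatives of smooth maps\<close>

lemma smooth_on_continuous_on: "smooth_on S f \<Longrightarrow> continuous_on S f"
  unfolding smooth_on_def by (metis Ck_on.simps(1))

lemma smooth_on_differentiable_at:
  "smooth_on S f \<Longrightarrow> open S \<Longrightarrow> z \<in> S \<Longrightarrow> f differentiable (at z)"
  unfolding smooth_on_def
  by (metis Ck_on.simps(2) differentiable_on_eq_differentiable_at)

definition dir_deriv :: "'a::real_normed_vector \<Rightarrow> ('a \<Rightarrow> 'b::real_normed_vector) \<Rightarrow> 'a \<Rightarrow> 'b" where
  "dir_deriv v g = (\<lambda>z. frechet_derivative g (at z) v)"

lemma pd_eq_dir_deriv: "pd i g = dir_deriv (axis i 1) g"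
  by (simp add: fun_eq_iff pd_def dir_deriv_def)

lemma smooth_on_dir_deriv: "smooth_on S g \<Longrightarrow> v \<in> Basis \<Longrightarrow> smooth_on S (dir_deriv v g)"
  unfolding smooth_on_def dir_deriv_def by (metis Ck_on.simps(2))

lemma smooth_on_pd: "smooth_on S g \<Longrightarrow> smooth_on S (pd i g)"
  unfolding pd_eq_dir_deriv by (simp add: smooth_on_dir_deriv)

text \<open>Unlike \<open>frechet_derivative_transform_within_open\<close>, no differentiability is needed:
  both sides are the same choice from the same set of derivatives.\<close>
lemma frechet_derivative_cong_open:
  assumes "open S" "z \<in> S" "\<And>y. y \<in> S \<Longrightarrow> f y = g y"
  shows "frechet_derivative f (at z) = frechet_derivative g (at z)"
proof -
  have "(f has_derivative D) (at z) \<longleftrightarrow> (g has_derivative D) (at z)" for D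
    using has_derivative_transform_within_open[OF _ assms(1,2)] assms(3) by metis
  then show ?thesis unfolding frechet_derivative_def by simp
qed

lemma pd_cong_open:
  "open S \<Longrightarrow> z \<in> S \<Longrightarrow> (\<And>y. y \<in> S \<Longrightarrow> f y = g y) \<Longrightarrow> pd i f z = pd i g z"
  unfolding pd_def using frechet_derivative_cong_open by metis

lemma has_vector_derivative_dir_deriv:
  assumes "g differentiable (at p)"
  shows "((\<lambda>s. g (p + s *\<^sub>R w)) has_vector_derivative dir_deriv w g p) (at 0)"
proof -
  have "((\<lambda>s. p + s *\<^sub>R w) has_derivative (\<lambda>s. s *\<^sub>R w)) (at 0)"
    by (auto intro!: derivative_eq_intros)
  moreover have "(g has_derivative frechet_derivative g (at p)) (at (p + 0 *\<^sub>R w))"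
    using assms by (simp add: frechet_derivative_works)
  ultimately
  have "((\<lambda>s. g (p + s *\<^sub>R w)) has_derivative (\<lambda>s. frechet_derivative g (at p) (s *\<^sub>R w))) (at 0)"
    by (rule has_derivative_compose)
  with linear_frechet_derivative[OF assms] show ?thesis
    unfolding has_vector_derivative_def dir_deriv_def by (simp add: linear_scale)
qed

lemma dir_deriv_inner_const:
  fixes a c :: "'a::real_normed_vector \<Rightarrow> 'b::real_inner"
  assumes "open S" "z \<in> S" "a differentiable (at z)" "c differentiable (at z)"
    and const: "\<And>p. p \<in> S \<Longrightarrow> a p \<bullet> c p = k"
  shows "dir_deriv v a z \<bullet> c z + a z \<bullet> dir_deriv v c z = 0"
proof -
  have "((\<lambda>p. a p \<bullet> c p) has_derivative
      (\<lambda>h. a z \<bullet> frechet_derivative c (at z) h + frechet_derivative a (at z) h \<bullet> c z)) (at z)"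
    using assms(3,4) by (intro has_derivative_inner) (simp_all add: frechet_derivative_works)
  moreover have "((\<lambda>p. a p \<bullet> c p) has_derivative (\<lambda>h. 0)) (at z)"
    by (rule has_derivative_transform_within_open[OF has_derivative_const assms(1,2)])
      (simp add: const)
  ultimately have "a z \<bullet> frechet_derivative c (at z) v + frechet_derivative a (at z) v \<bullet> c z = 0"
    using has_derivative_unique by metis
  then show ?thesis unfolding dir_deriv_def by (simp add: add.commute)
qed

section \<open>Symmetry of second derivatives\<close>

lemma line_derivative_shift:
  fixes g gu :: "'a::real_normed_vector \<Rightarrow> real"
  assumes du: "\<And>p. p \<in> S \<Longrightarrow> ((\<lambda>s. g (p + s *\<^sub>R u)) has_real_derivative gu p) (at 0)"
    and "q + s0 *\<^sub>R u \<in> S"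
  shows "((\<lambda>s. g (q + s *\<^sub>R u)) has_real_derivative gu (q + s0 *\<^sub>R u)) (at s0)"
proof -
  have "((\<lambda>s. g ((q + s0 *\<^sub>R u) + s *\<^sub>R u)) has_real_derivative gu (q + s0 *\<^sub>R u)) (at 0)"
    using du[OF assms(2)] .
  then have "((\<lambda>s. g (q + (s + s0) *\<^sub>R u)) has_real_derivative gu (q + s0 *\<^sub>R u)) (at 0)"
    by (simp add: algebra_simps)
  then show ?thesis using DERIV_shift[of "\<lambda>s. g (q + s *\<^sub>R u)" _ 0 s0] by simp
qed

lemma second_difference_mean_value:
  fixes g gu guv :: "'a::real_normed_vector \<Rightarrow> real"
  assumes du: "\<And>p. p \<in> S \<Longrightarrow> ((\<lambda>s. g (p + s *\<^sub>R u)) has_real_derivative gu p) (at 0)"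
    and duv: "\<And>p. p \<in> S \<Longrightarrow> ((\<lambda>s. gu (p + s *\<^sub>R v)) has_real_derivative guv p) (at 0)"
    and h: "0 < h"
    and square: "\<And>s r. 0 \<le> s \<Longrightarrow> s \<le> h \<Longrightarrow> 0 \<le> r \<Longrightarrow> r \<le> h \<Longrightarrow> z + s *\<^sub>R u + r *\<^sub>R v \<in> S"
  shows "\<exists>s r. 0 < s \<and> s < h \<and> 0 < r \<and> r < h \<and>
     g (z + h *\<^sub>R u + h *\<^sub>R v) - g (z + h *\<^sub>R u) - g (z + h *\<^sub>R v) + g z
       = h * h * guv (z + s *\<^sub>R u + r *\<^sub>R v)"
proof -
  define \<phi> where "\<phi> s = g (z + h *\<^sub>R v + s *\<^sub>R u) - g (z + s *\<^sub>R u)" for s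
  have "\<exists>s>0. s < h \<and> \<phi> h - \<phi> 0 = (h - 0) * (gu (z + h *\<^sub>R v + s *\<^sub>R u) - gu (z + s *\<^sub>R u))"
    unfolding \<phi>_def
  proof (rule MVT2[OF h], rule DERIV_diff)
    fix s assume s: "0 \<le> s" "s \<le> h"
    have "z + h *\<^sub>R v + s *\<^sub>R u \<in> S"
      using square[OF s, of h] h by (simp add: algebra_simps)
    then show "((\<lambda>s. g (z + h *\<^sub>R v + s *\<^sub>R u)) has_real_derivative gu (z + h *\<^sub>R v + s *\<^sub>R u)) (at s)"
      using line_derivative_shift[OF du] by blast
    have "z + s *\<^sub>R u \<in> S" using square[OF s, of 0] h by simp
    then show "((\<lambda>s. g (z + s *\<^sub>R u)) has_real_derivative gu (z + s *\<^sub>R u)) (at s)"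
      using line_derivative_shift[OF du] by blast
  qed
  then obtain s where s: "0 < s" "s < h"
    "\<phi> h - \<phi> 0 = h * (gu (z + s *\<^sub>R u + h *\<^sub>R v) - gu (z + s *\<^sub>R u))"
    by (auto simp: algebra_simps)
  have "\<exists>r>0. r < h \<and> gu (z + s *\<^sub>R u + h *\<^sub>R v) - gu (z + s *\<^sub>R u + 0 *\<^sub>R v)
          = (h - 0) * guv (z + s *\<^sub>R u + r *\<^sub>R v)"
  proof (rule MVT2[OF h])
    fix r assume "0 \<le> r" "r \<le> h"
    then have "z + s *\<^sub>R u + r *\<^sub>R v \<in> S" using square[of s r] s by simp
    then show "((\<lambda>r. gu (z + s *\<^sub>R u + r *\<^sub>R v)) has_real_derivative guv (z + s *\<^sub>R u + r *\<^sub>R v)) (at r)"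
      using line_derivative_shift[OF duv] by blast
  qed
  then obtain r where "0 < r" "r < h"
    "gu (z + s *\<^sub>R u + h *\<^sub>R v) - gu (z + s *\<^sub>R u) = h * guv (z + s *\<^sub>R u + r *\<^sub>R v)"
    by auto
  moreover have "g (z + h *\<^sub>R u + h *\<^sub>R v) - g (z + h *\<^sub>R u) - g (z + h *\<^sub>R v) + g z = \<phi> h - \<phi> 0"
    by (simp add: \<phi>_def algebra_simps)
  ultimately show ?thesis using s by (intro exI[of _ s] exI[of _ r]) simp
qed

lemma small_square_in_open:
  fixes u v :: "'a::real_normed_vector"
  assumes "open S" "z \<in> S" "0 < \<delta>"
  obtains h where "0 < h"
    "\<And>s r a b. 0 \<le> s \<Longrightarrow> s \<le> h \<Longrightarrow> 0 \<le> r \<Longrightarrow> r \<le> h \<Longrightarrow> a \<in> {u, v} \<Longrightarrow> b \<in> {u, v} \<Longrightarrow>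
      z + s *\<^sub>R a + r *\<^sub>R b \<in> S \<and> dist (z + s *\<^sub>R a + r *\<^sub>R b) z < \<delta>"
proof -
  obtain e where e: "e > 0" "ball z e \<subseteq> S" using assms open_contains_ball by blast
  define d where "d = min e \<delta>"
  define h where "h = d / (2 * (norm u + norm v + 1))"
  have "d > 0" using e \<open>0 < \<delta>\<close> by (simp add: d_def)
  have pos: "2 * (norm u + norm v + 1) > 0" by (smt (verit) norm_ge_zero)
  have h: "h > 0" unfolding h_def using \<open>d > 0\<close> pos by simp
  have "2 * h * (norm u + norm v) < 2 * h * (norm u + norm v + 1)" using h by simp
  also have "\<dots> = d" unfolding h_def using pos by (simp add: field_simps)
  finally have hd: "2 * h * (norm u + norm v) < d" .
  show ?thesis
  proof (rule that[OF h])
    fix s r a b assume sr: "0 \<le> s" "s \<le> h" "0 \<le> r" "r \<le> h" and ab: "a \<in> {u, v}" "b \<in> {u, v}"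
    have "dist (z + s *\<^sub>R a + r *\<^sub>R b) z \<le> s * norm a + r * norm b"
      using norm_triangle_ineq[of "s *\<^sub>R a" "r *\<^sub>R b"] sr by (simp add: dist_norm)
    also have "\<dots> \<le> h * (norm u + norm v) + h * (norm u + norm v)"
      using sr ab by (intro add_mono mult_mono) auto
    finally have "dist (z + s *\<^sub>R a + r *\<^sub>R b) z < d" using hd by simp
    then show "z + s *\<^sub>R a + r *\<^sub>R b \<in> S \<and> dist (z + s *\<^sub>R a + r *\<^sub>R b) z < \<delta>"
      using e(2) by (auto simp: d_def dist_commute)
  qed
qed

lemma mixed_line_derivatives_meet:
  fixes g gu gv guv gvu :: "'a::real_normed_vector \<Rightarrow> real"
  assumes S: "open S" "z \<in> S"
    and du: "\<And>p. p \<in> S \<Longrightarrow> ((\<lambda>s. g (p + s *\<^sub>R u)) has_real_derivative gu p) (at 0)"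
    and dv: "\<And>p. p \<in> S \<Longrightarrow> ((\<lambda>s. g (p + s *\<^sub>R v)) has_real_derivative gv p) (at 0)"
    and duv: "\<And>p. p \<in> S \<Longrightarrow> ((\<lambda>s. gu (p + s *\<^sub>R v)) has_real_derivative guv p) (at 0)"
    and dvu: "\<And>p. p \<in> S \<Longrightarrow> ((\<lambda>s. gv (p + s *\<^sub>R u)) has_real_derivative gvu p) (at 0)"
    and "0 < \<delta>"
  shows "\<exists>p q. dist p z < \<delta> \<and> dist q z < \<delta> \<and> guv p = gvu q"
proof -
  obtain h where h: "0 < h" and square:
    "\<And>s r a b. 0 \<le> s \<Longrightarrow> s \<le> h \<Longrightarrow> 0 \<le> r \<Longrightarrow> r \<le> h \<Longrightarrow> a \<in> {u, v} \<Longrightarrow> b \<in> {u, v} \<Longrightarrow>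
      z + s *\<^sub>R a + r *\<^sub>R b \<in> S \<and> dist (z + s *\<^sub>R a + r *\<^sub>R b) z < \<delta>"
    using small_square_in_open[OF S \<open>0 < \<delta>\<close>] by blast
  have square_uv: "z + s *\<^sub>R u + r *\<^sub>R v \<in> S" and square_vu: "z + s *\<^sub>R v + r *\<^sub>R u \<in> S"
    if "0 \<le> s" "s \<le> h" "0 \<le> r" "r \<le> h" for s r
    using square[OF that] by simp_all
  text \<open>Both mixed derivatives equal the same second difference quotient, up to the mean
    value theorem.\<close>
  obtain s1 r1 where A: "0 < s1" "s1 < h" "0 < r1" "r1 < h"
    "g (z + h *\<^sub>R u + h *\<^sub>R v) - g (z + h *\<^sub>R u) - g (z + h *\<^sub>R v) + g z
       = h * h * guv (z + s1 *\<^sub>R u + r1 *\<^sub>R v)"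
    using second_difference_mean_value[OF du duv h square_uv] by blast
  obtain s2 r2 where B: "0 < s2" "s2 < h" "0 < r2" "r2 < h"
    "g (z + h *\<^sub>R v + h *\<^sub>R u) - g (z + h *\<^sub>R v) - g (z + h *\<^sub>R u) + g z
       = h * h * gvu (z + s2 *\<^sub>R v + r2 *\<^sub>R u)"
    using second_difference_mean_value[OF dv dvu h square_vu] by blast
  have swap: "z + h *\<^sub>R v + h *\<^sub>R u = z + h *\<^sub>R u + h *\<^sub>R v" by (simp add: algebra_simps)
  have "h * h * guv (z + s1 *\<^sub>R u + r1 *\<^sub>R v) = h * h * gvu (z + s2 *\<^sub>R v + r2 *\<^sub>R u)"
    using A(5) B(5)[unfolded swap] by linarith
  then have "guv (z + s1 *\<^sub>R u + r1 *\<^sub>R v) = gvu (z + s2 *\<^sub>R v + r2 *\<^sub>R u)"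
    using h by simp
  moreover have "dist (z + s1 *\<^sub>R u + r1 *\<^sub>R v) z < \<delta>" "dist (z + s2 *\<^sub>R v + r2 *\<^sub>R u) z < \<delta>"
    using square[of s1 r1 u v] square[of s2 r2 v u] A B by auto
  ultimately show ?thesis by blast
qed

lemma mixed_line_derivatives_eq:
  fixes g gu gv guv gvu :: "'a::real_normed_vector \<Rightarrow> real"
  assumes S: "open S" "z \<in> S"
    and du: "\<And>p. p \<in> S \<Longrightarrow> ((\<lambda>s. g (p + s *\<^sub>R u)) has_real_derivative gu p) (at 0)"
    and dv: "\<And>p. p \<in> S \<Longrightarrow> ((\<lambda>s. g (p + s *\<^sub>R v)) has_real_derivative gv p) (at 0)"
    and duv: "\<And>p. p \<in> S \<Longrightarrow> ((\<lambda>s. gu (p + s *\<^sub>R v)) has_real_derivative guv p) (at 0)"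
    and dvu: "\<And>p. p \<in> S \<Longrightarrow> ((\<lambda>s. gv (p + s *\<^sub>R u)) has_real_derivative gvu p) (at 0)"
    and "isCont guv z" "isCont gvu z"
  shows "guv z = gvu z"
proof (rule ccontr)
  assume "guv z \<noteq> gvu z"
  define e where "e = \<bar>guv z - gvu z\<bar> / 2"
  have "e > 0" using \<open>guv z \<noteq> gvu z\<close> by (simp add: e_def)
  obtain d1 where d1: "d1 > 0" "\<And>y. dist y z < d1 \<Longrightarrow> dist (guv y) (guv z) < e"
    using \<open>isCont guv z\<close> \<open>e > 0\<close> unfolding continuous_at_eps_delta by blast
  obtain d2 where d2: "d2 > 0" "\<And>y. dist y z < d2 \<Longrightarrow> dist (gvu y) (gvu z) < e"
    using \<open>isCont gvu z\<close> \<open>e > 0\<close> unfolding continuous_at_eps_delta by blast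
  obtain p q where "dist p z < min d1 d2" "dist q z < min d1 d2" "guv p = gvu q"
    using mixed_line_derivatives_meet[OF S du dv duv dvu, of "min d1 d2"] d1 d2 by auto
  then have "dist (guv p) (guv z) < e" "dist (guv p) (gvu z) < e"
    using d1(2)[of p] d2(2)[of q] by auto
  then show False unfolding e_def dist_real_def by (simp add: abs_if split: if_splits)
qed

lemma dir_deriv_commute:
  fixes g :: "'a::euclidean_space \<Rightarrow> 'b::euclidean_space"
  assumes S: "open S" "smooth_on S g" "z \<in> S" and uv: "u \<in> Basis" "v \<in> Basis"
  shows "dir_deriv v (dir_deriv u g) z = dir_deriv u (dir_deriv v g) z"
proof (rule euclidean_eqI)
  fix b :: 'b assume "b \<in> Basis"
  define Gu Gv where "Gu = dir_deriv u g" and "Gv = dir_deriv v g"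
  have smooth: "smooth_on S Gu" "smooth_on S Gv"
    "smooth_on S (dir_deriv v Gu)" "smooth_on S (dir_deriv u Gv)"
    unfolding Gu_def Gv_def using S(2) uv by (simp_all add: smooth_on_dir_deriv)
  have line: "((\<lambda>s. G (p + s *\<^sub>R w) \<bullet> b) has_real_derivative dir_deriv w G p \<bullet> b) (at 0)"
    if "smooth_on S G" "p \<in> S" for G :: "'a \<Rightarrow> 'b" and p w
    unfolding has_real_derivative_iff_has_vector_derivative
    by (rule bounded_linear.has_vector_derivative[OF bounded_linear_inner_left
          has_vector_derivative_dir_deriv[OF smooth_on_differentiable_at[OF that(1) S(1) that(2)]]])
  have cont: "isCont (\<lambda>p. G p \<bullet> b) z" if "smooth_on S G" for G :: "'a \<Rightarrow> 'b"
  proof -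
    have "isCont G z"
      using smooth_on_continuous_on[OF that] S(1,3) continuous_on_eq_continuous_at by blast
    then show ?thesis by (intro continuous_intros)
  qed
  show "dir_deriv v (dir_deriv u g) z \<bullet> b = dir_deriv u (dir_deriv v g) z \<bullet> b"
    unfolding Gu_def[symmetric] Gv_def[symmetric]
  proof (rule mixed_line_derivatives_eq[OF S(1,3)])
    fix p assume "p \<in> S"
    show "((\<lambda>s. g (p + s *\<^sub>R u) \<bullet> b) has_real_derivative Gu p \<bullet> b) (at 0)"
      "((\<lambda>s. g (p + s *\<^sub>R v) \<bullet> b) has_real_derivative Gv p \<bullet> b) (at 0)"
      unfolding Gu_def Gv_def using line[OF S(2) \<open>p \<in> S\<close>] by blast+
    show "((\<lambda>s. Gu (p + s *\<^sub>R v) \<bullet> b) has_real_derivative dir_deriv v Gu p \<bullet> b) (at 0)"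
      "((\<lambda>s. Gv (p + s *\<^sub>R u) \<bullet> b) has_real_derivative dir_deriv u Gv p \<bullet> b) (at 0)"
      using line[OF smooth(1) \<open>p \<in> S\<close>] line[OF smooth(2) \<open>p \<in> S\<close>] by blast+
  qed (use cont[OF smooth(3)] cont[OF smooth(4)] in auto)
qed

section \<open>Functions of time and space\<close>

definition time_dir :: "real \<times> 'a::real_normed_vector" where
  "time_dir = (1, 0)"

definition space_dir :: "'n::finite \<Rightarrow> real \<times> (real^'n)" where
  "space_dir i = (0, axis i 1)"

lemma time_dir_in_Basis: "(time_dir :: real \<times> 'a::euclidean_space) \<in> Basis"
  by (simp add: time_dir_def Basis_prod_def)

lemma space_dir_in_Basis: "space_dir i \<in> Basis"
  by (auto simp: space_dir_def Basis_prod_def)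

lemma space_slice_has_derivative:
  fixes g :: "real \<times> 'a::real_normed_vector \<Rightarrow> 'b::real_normed_vector"
  assumes "g differentiable (at (t, y))"
  shows "((\<lambda>w. g (t, w)) has_derivative (\<lambda>v. frechet_derivative g (at (t, y)) (0, v))) (at y)"
proof -
  have "((\<lambda>w. (t, w)) has_derivative (\<lambda>v. (0, v))) (at y)"
    by (intro has_derivative_Pair has_derivative_const has_derivative_ident)
  from has_derivative_compose[OF this] assms show ?thesis
    by (simp add: frechet_derivative_works)
qed

lemma pd_space_slice:
  fixes g :: "real \<times> (real^'n::finite) \<Rightarrow> 'b::real_normed_vector"
  assumes "g differentiable (at (t, y))"
  shows "pd i (\<lambda>w. g (t, w)) y = dir_deriv (space_dir i) g (t, y)"
  using frechet_derivative_at[OF space_slice_has_derivative[OF assms]]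
  unfolding pd_def dir_deriv_def space_dir_def by metis

lemma time_slice_has_vector_derivative:
  fixes g :: "real \<times> 'a::real_normed_vector \<Rightarrow> 'b::real_normed_vector"
  assumes "g differentiable (at (t, y))"
  shows "((\<lambda>s. g (s, y)) has_vector_derivative dir_deriv time_dir g (t, y)) (at t)"
proof -
  have "((\<lambda>s. (s, y)) has_derivative (\<lambda>s. (s, 0))) (at t)"
    by (intro has_derivative_Pair has_derivative_const has_derivative_ident)
  from has_derivative_compose[OF this] assms
  have "((\<lambda>s. g (s, y)) has_derivative (\<lambda>s. frechet_derivative g (at (t, y)) (s, 0))) (at t)"
    by (simp add: frechet_derivative_works)
  moreover have "(\<lambda>s. frechet_derivative g (at (t, y)) (s, 0))
      = (\<lambda>s. s *\<^sub>R frechet_derivative g (at (t, y)) (1, 0))"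
    using linear_frechet_derivative[OF assms] by (auto simp: linear_scale[symmetric])
  ultimately show ?thesis
    unfolding has_vector_derivative_def dir_deriv_def time_dir_def by simp
qed

section \<open>Matrix-valued functions and inverse matrices\<close>

lemma has_vector_derivative_vec_lambda:
  fixes f :: "real \<Rightarrow> 'a::euclidean_space ^ 'n::finite"
  assumes "\<And>i. ((\<lambda>t. f t $ i) has_vector_derivative d $ i) (at t0)"
  shows "(f has_vector_derivative d) (at t0)"
  unfolding has_vector_derivative_def
proof (subst has_derivative_componentwise_within, intro ballI)
  fix b :: "'a^'n" assume "b \<in> Basis"
  then obtain i u where b: "b = axis i u" "u \<in> Basis" unfolding Basis_vec_def by auto
  have "((\<lambda>t. f t $ i \<bullet> u) has_derivative (\<lambda>h. (h *\<^sub>R d $ i) \<bullet> u)) (at t0)"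
    using assms[of i] unfolding has_vector_derivative_def by (intro has_derivative_inner_left)
  then show "((\<lambda>x. f x \<bullet> b) has_derivative (\<lambda>x. x *\<^sub>R d \<bullet> b)) (at t0)"
    by (simp add: b inner_axis)
qed

lemma has_vector_derivative_vec_nth:
  "(f has_vector_derivative d) (at t0) \<Longrightarrow> ((\<lambda>t. f t $ i) has_vector_derivative d $ i) (at t0)"
  by (rule bounded_linear.has_vector_derivative[OF bounded_linear_vec_nth])

lemma matrix_diff_ldistrib: "A ** (B - C) = A ** B - A ** (C :: 'a::ring_1^'p^'n)"
  by (simp add: matrix_matrix_mult_def vec_eq_iff sum_subtractf right_diff_distrib)

lemma has_vector_derivative_matrix_mult:
  fixes A :: "real \<Rightarrow> real^'n::finite^'m::finite" and B :: "real \<Rightarrow> real^'p::finite^'n"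
  assumes "(A has_vector_derivative A') (at t0)" "(B has_vector_derivative B') (at t0)"
  shows "((\<lambda>t. A t ** B t) has_vector_derivative A t0 ** B' + A' ** B t0) (at t0)"
proof (intro has_vector_derivative_vec_lambda)
  fix i j
  have "((\<lambda>t. \<Sum>k\<in>UNIV. A t $ i $ k * B t $ k $ j) has_vector_derivative
      (\<Sum>k\<in>UNIV. A t0 $ i $ k * B' $ k $ j + A' $ i $ k * B t0 $ k $ j)) (at t0)"
    using assms by (intro has_vector_derivative_sum has_vector_derivative_mult
        has_vector_derivative_vec_nth)
  then show "((\<lambda>t. (A t ** B t) $ i $ j) has_vector_derivative (A t0 ** B' + A' ** B t0) $ i $ j) (at t0)"
    by (simp add: matrix_matrix_mult_def sum.distrib)
qed

lemma matrix_inv_right: "invertible A \<Longrightarrow> A ** matrix_inv A = mat 1"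
  and matrix_inv_left: "invertible A \<Longrightarrow> matrix_inv A ** A = mat 1"
  unfolding invertible_def matrix_inv_def by (metis (mono_tags, lifting) someI)+

lemma matrix_inv_cramer:
  fixes A :: "real^'n::finite^'n"
  assumes "invertible A"
  shows "matrix_inv A $ k $ l = det (\<chi> i j. if j = k then axis l 1 $ i else A $ i $ j) / det A"
proof -
  have "A *v (matrix_inv A *v axis l 1) = axis l 1"
    using assms by (simp add: matrix_vector_mul_assoc matrix_inv_right)
  then have "matrix_inv A *v axis l 1 = (\<chi> k. det (\<chi> i j. if j = k then axis l 1 $ i else A $ i $ j) / det A)"
    using cramer assms invertible_det_nz by blast
  moreover have "(matrix_inv A *v axis l 1) $ k = matrix_inv A $ k $ l"
    by (simp add: matrix_vector_mult_def axis_def if_distrib cong: if_cong)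
  ultimately show ?thesis by simp
qed

lemma det_differentiable:
  fixes C :: "real \<Rightarrow> real^'n::finite^'n"
  assumes "\<And>i j. (\<lambda>t. C t $ i $ j) differentiable (at t0)"
  shows "(\<lambda>t. det (C t)) differentiable (at t0)"
  unfolding det_def
proof (rule differentiable_sum, simp, intro ballI)
  fix p :: "'n \<Rightarrow> 'n"
  have "\<forall>i. \<exists>D. ((\<lambda>t. C t $ i $ p i) has_derivative D) (at t0)"
    using assms unfolding differentiable_def by blast
  then obtain D where "\<And>i. ((\<lambda>t. C t $ i $ p i) has_derivative D i) (at t0)"
    by metis
  then have "(\<lambda>t. \<Prod>i\<in>UNIV. C t $ i $ p i) differentiable (at t0)"
    unfolding differentiable_def using has_derivative_prod[of UNIV "\<lambda>i t. C t $ i $ p i" D] by blast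
  then show "(\<lambda>t. of_int (sign p) * (\<Prod>i\<in>UNIV. C t $ i $ p i)) differentiable (at t0)"
    by (intro differentiable_mult differentiable_const)
qed

text \<open>By Cramer's rule each entry of the inverse is a quotient of determinants.\<close>
lemma matrix_inv_entry_differentiable:
  fixes M :: "real \<Rightarrow> real^'n::finite^'n"
  assumes I: "open I" "t0 \<in> I" "\<And>t. t \<in> I \<Longrightarrow> invertible (M t)"
    and entries: "\<And>i j. (\<lambda>t. M t $ i $ j) differentiable (at t0)"
  shows "\<exists>d. ((\<lambda>t. matrix_inv (M t) $ k $ l) has_vector_derivative d) (at t0)"
proof -
  define Q where "Q t = det (\<chi> i j. if j = k then axis l 1 $ i else M t $ i $ j) / det (M t)" for t
  have "(\<lambda>t. det (\<chi> i j. if j = k then axis l 1 $ i else M t $ i $ j)) differentiable (at t0)"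
  proof (rule det_differentiable)
    fix i j
    show "(\<lambda>t. (\<chi> i j. if j = k then axis l 1 $ i else M t $ i $ j) $ i $ j) differentiable (at t0)"
      by (cases "j = k") (simp_all add: entries)
  qed
  moreover have "(\<lambda>t. det (M t)) differentiable (at t0)"
    by (rule det_differentiable) (simp add: entries)
  moreover have "det (M t0) \<noteq> 0" using I invertible_det_nz by blast
  ultimately have "Q differentiable (at t0)" unfolding Q_def by (rule differentiable_divide)
  then obtain d where "(Q has_real_derivative d) (at t0)"
    using real_differentiable_def by blast
  then have "((\<lambda>t. matrix_inv (M t) $ k $ l) has_vector_derivative d) (at t0)"
    unfolding has_real_derivative_iff_has_vector_derivative
    by (rule has_vector_derivative_transform_within_open[OF _ I(1,2)])
      (simp add: Q_def matrix_inv_cramer I(3))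
  then show ?thesis by blast
qed

lemma matrix_inv_differentiable:
  fixes M :: "real \<Rightarrow> real^'n::finite^'n"
  assumes I: "open I" "t0 \<in> I" "\<And>t. t \<in> I \<Longrightarrow> invertible (M t)"
    and dM: "(M has_vector_derivative M') (at t0)"
  shows "\<exists>D. ((\<lambda>t. matrix_inv (M t)) has_vector_derivative D) (at t0)"
proof -
  have entries: "(\<lambda>t. M t $ i $ j) differentiable (at t0)" for i j
    using has_vector_derivative_vec_nth[OF has_vector_derivative_vec_nth[OF dM]]
    by (rule differentiableI_vector)
  have "\<exists>d. ((\<lambda>t. matrix_inv (M t) $ k $ l) has_vector_derivative d) (at t0)" for k l
    by (rule matrix_inv_entry_differentiable[OF I entries])
  then have "\<forall>k l. \<exists>d. ((\<lambda>t. matrix_inv (M t) $ k $ l) has_vector_derivative d) (at t0)"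
    by blast
  then obtain d where "\<And>k l. ((\<lambda>t. matrix_inv (M t) $ k $ l) has_vector_derivative d k l) (at t0)"
    by metis
  then have "((\<lambda>t. matrix_inv (M t)) has_vector_derivative (\<chi> k l. d k l)) (at t0)"
    by (intro has_vector_derivative_vec_lambda) simp
  then show ?thesis by blast
qed

text \<open>Once the derivative is known to exist, it is read off from \<open>(M\<^sup>-\<^sup>1 M)' = 0\<close>.\<close>
lemma has_vector_derivative_matrix_inv:
  fixes M :: "real \<Rightarrow> real^'n::finite^'n"
  assumes I: "open I" "t0 \<in> I" "\<And>t. t \<in> I \<Longrightarrow> invertible (M t)"
    and dM: "(M has_vector_derivative M') (at t0)"
  shows "((\<lambda>t. matrix_inv (M t)) has_vector_derivative
           - (matrix_inv (M t0) ** M' ** matrix_inv (M t0))) (at t0)"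
proof -
  define X where "X = matrix_inv (M t0)"
  obtain D where D: "((\<lambda>t. matrix_inv (M t)) has_vector_derivative D) (at t0)"
    using matrix_inv_differentiable[OF I dM] by blast
  have "((\<lambda>t. matrix_inv (M t) ** M t) has_vector_derivative X ** M' + D ** M t0) (at t0)"
    unfolding X_def by (rule has_vector_derivative_matrix_mult[OF D dM])
  moreover have "((\<lambda>t. matrix_inv (M t) ** M t) has_vector_derivative 0) (at t0)"
    by (rule has_vector_derivative_transform_within_open[OF _ I(1,2)])
      (simp_all add: matrix_inv_left I(3))
  ultimately have "X ** M' + D ** M t0 = 0"
    using vector_derivative_unique_at by blast
  then have "D ** M t0 = - (X ** M')" by (simp add: eq_neg_iff_add_eq_0 add.commute)
  then have "D = - (X ** M') ** X"
    using matrix_inv_right[OF I(3)[OF I(2)]]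
    by (metis X_def matrix_mul_assoc matrix_mul_rid)
  also have "\<dots> = - (X ** M' ** X)"
    by (simp add: matrix_matrix_mult_def vec_eq_iff sum_negf)
  finally show ?thesis using D X_def by simp
qed

section \<open>Gram matrices and the Gauss and Weingarten formulas\<close>

lemma linear_axis_expansion:
  fixes L :: "real^'n::finite \<Rightarrow> real^'m::finite"
  assumes "linear L"
  shows "L c = (\<Sum>i\<in>UNIV. c $ i *\<^sub>R L (axis i 1))"
proof -
  have "L c = L (\<Sum>i\<in>UNIV. c $ i *\<^sub>R axis i 1)"
    by (simp add: basis_expansion flip: scalar_mult_eq_scaleR)
  also have "\<dots> = (\<Sum>i\<in>UNIV. c $ i *\<^sub>R L (axis i 1))"
    using assms by (simp add: linear_sum linear_scale)
  finally show ?thesis .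
qed

lemma gram_matrix_invertible:
  fixes L :: "real^'n::finite \<Rightarrow> real^'m::finite"
  assumes L: "linear L" "inj L"
  shows "invertible (\<chi> i j. L (axis i 1) \<bullet> L (axis j 1))"
proof -
  define G where "G = (\<chi> i j. L (axis i 1) \<bullet> L (axis j 1))"
  have G_mult: "(G *v c) $ i = L (axis i 1) \<bullet> L c" for c i
    by (simp add: G_def matrix_vector_mult_def linear_axis_expansion[OF L(1), of c]
        inner_sum_right mult.commute)
  have "c = 0" if "G *v c = 0" for c
  proof -
    have "L c \<bullet> L c = (\<Sum>i\<in>UNIV. c $ i * (L (axis i 1) \<bullet> L c))"
      by (subst (1) linear_axis_expansion[OF L(1), of c]) (simp add: inner_sum_left)
    also have "\<dots> = 0" using that G_mult[of c] by (simp add: vec_eq_iff)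
    finally show "c = 0" using L linear_injective_0 by auto
  qed
  then have "inj ((*v) G)" by (simp add: linear_injective_0)
  then obtain B where "B ** G = mat 1" using matrix_left_invertible_injective by blast
  then show ?thesis
    unfolding G_def[symmetric] invertible_def using matrix_left_right_inverse by blast
qed

text \<open>The codimension is one, so the normal and the image of \<open>L\<close> span the whole space.\<close>
lemma orthogonal_normal_tangent_eq_0:
  fixes L :: "real^'n::finite \<Rightarrow> real^'m::finite"
  assumes L: "linear L" "inj L" and dim: "CARD('m) = CARD('n) + 1"
    and N: "N \<bullet> N = 1" "\<And>i. N \<bullet> L (axis i 1) = 0"
    and u: "u \<bullet> N = 0" "\<And>i. u \<bullet> L (axis i 1) = 0"
  shows "u = 0"
proof -
  define B where "B = range (\<lambda>i. L (axis i 1))"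
  have B_Basis: "B = L ` Basis" unfolding B_def Basis_vec_def by auto
  have "independent B"
    unfolding B_Basis using linear_independent_injective_image[OF L(1) independent_Basis] L(2)
    by (meson inj_on_subset subset_UNIV)
  have card_B: "card B = CARD('n)"
    unfolding B_Basis using card_image[of L Basis] L(2) by (simp add: inj_on_def inj_def)
  have "orthogonal N y" if "y \<in> span B" for y
    using orthogonal_to_span[OF that] N(2) unfolding B_def orthogonal_def by auto
  then have "N \<notin> span B" using N(1) unfolding orthogonal_def by auto
  then have "independent (insert N B)" "N \<notin> B"
    using \<open>independent B\<close> span_base by (auto simp: independent_insert)
  moreover have "card (insert N B) = CARD('m)"
    using card_B \<open>N \<notin> B\<close> dim by (simp add: B_def)
  ultimately have "UNIV \<subseteq> span (insert N B)"
    by (intro card_ge_dim_independent[OF subset_UNIV]) simp_all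
  moreover have "orthogonal u y" if "y \<in> insert N B" for y
    using that u unfolding B_def orthogonal_def by (auto simp: inner_commute)
  ultimately have "orthogonal u u" using orthogonal_to_span by blast
  then show "u = 0" unfolding orthogonal_def by simp
qed

lemma normal_tangent_decomposition:
  fixes L :: "real^'n::finite \<Rightarrow> real^'m::finite"
  assumes L: "linear L" "inj L" and dim: "CARD('m) = CARD('n) + 1"
    and N: "N \<bullet> N = 1" "\<And>i. N \<bullet> L (axis i 1) = 0"
  shows "w = (w \<bullet> N) *\<^sub>R N + (\<Sum>m\<in>UNIV. (\<Sum>p\<in>UNIV.
            matrix_inv (\<chi> i j. L (axis i 1) \<bullet> L (axis j 1)) $ m $ p * (w \<bullet> L (axis p 1))) *\<^sub>R L (axis m 1))"
proof -
  define G where "G = (\<chi> i j. L (axis i 1) \<bullet> L (axis j 1))"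
  define X where "X = matrix_inv G"
  have GX: "G ** X = mat 1"
    unfolding X_def G_def using matrix_inv_right gram_matrix_invertible[OF L] by blast
  define c where "c m = (\<Sum>p\<in>UNIV. X $ m $ p * (w \<bullet> L (axis p 1)))" for m
  define u where "u = w - ((w \<bullet> N) *\<^sub>R N + (\<Sum>m\<in>UNIV. c m *\<^sub>R L (axis m 1)))"
  have N': "L (axis i 1) \<bullet> N = 0" for i using N(2)[of i] by (simp add: inner_commute)
  have "u \<bullet> N = 0"
    unfolding u_def using N(1) N' by (simp add: inner_diff_left inner_add_left inner_sum_left)
  moreover have "u \<bullet> L (axis q 1) = 0" for q
  proof -
    have "(\<Sum>m\<in>UNIV. c m * (L (axis m 1) \<bullet> L (axis q 1)))
        = (\<Sum>m\<in>UNIV. \<Sum>p\<in>UNIV. (w \<bullet> L (axis p 1)) * (G $ q $ m * X $ m $ p))"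
      by (simp add: c_def G_def sum_distrib_left inner_commute mult_ac)
    also have "\<dots> = (\<Sum>p\<in>UNIV. (w \<bullet> L (axis p 1)) * (G ** X) $ q $ p)"
      by (subst sum.swap) (simp add: matrix_matrix_mult_def sum_distrib_left)
    also have "\<dots> = w \<bullet> L (axis q 1)"
      unfolding GX by (simp add: mat_def if_distrib cong: if_cong)
    finally show ?thesis
      unfolding u_def using N(2) by (simp add: inner_diff_left inner_add_left inner_sum_left)
  qed
  ultimately have "u = 0" by (rule orthogonal_normal_tangent_eq_0[OF L dim N])
  then show ?thesis unfolding u_def c_def X_def G_def by simp
qed

lemma metric_invertible:
  "g differentiable (at x) \<Longrightarrow> inj (frechet_derivative g (at x)) \<Longrightarrow> invertible (metric g x)"
  unfolding metric_def pd_def by (rule gram_matrix_invertible[OF linear_frechet_derivative])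

lemma gauss_formula:
  fixes g :: "real^'n::finite \<Rightarrow> real^'m::finite"
  assumes dim: "CARD('m) = CARD('n) + 1"
    and g: "g differentiable (at x)" "inj (frechet_derivative g (at x))"
    and N: "N x \<bullet> N x = 1" "\<And>i. N x \<bullet> pd i g x = 0"
  shows "pd i (pd j g) x = sff g N x i j + (\<Sum>m\<in>UNIV. christoffel g x m i j *\<^sub>R pd m g x)"
  using normal_tangent_decomposition[OF linear_frechet_derivative[OF g(1)] g(2) dim N(1),
      of "pd i (pd j g) x"] N(2)
  unfolding sff_def christoffel_def metric_inv_def metric_def pd_def by simp

definition sff_matrix :: "(real^'n::finite \<Rightarrow> real^'m::finite) \<Rightarrow> (real^'n \<Rightarrow> real^'m) \<Rightarrow> real^'n \<Rightarrow> real^'n^'n" where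
  "sff_matrix g N x = (\<chi> l j. N x \<bullet> pd j (pd l g) x)"

lemma weingarten_formula:
  assumes "open U" "x \<in> U" "N differentiable (at x)" "\<And>l. pd l g differentiable (at x)"
    and normal: "\<And>y i. y \<in> U \<Longrightarrow> N y \<bullet> pd i g y = 0"
  shows "shape_op g N x = metric_inv g x ** sff_matrix g N x"
proof -
  have deriv_normal: "pd j N x \<bullet> pd l g x + N x \<bullet> pd j (pd l g) x = 0" for j l
    using dir_deriv_inner_const[OF assms(1-4) normal] unfolding pd_eq_dir_deriv .
  have "- (pd j N x \<bullet> pd l g x) = N x \<bullet> pd j (pd l g) x" for j l
    using deriv_normal[of j l] by linarith
  then show ?thesis
    by (simp add: shape_op_def sff_matrix_def matrix_matrix_mult_def)
qed

section \<open>Conformal infinitesimal variations\<close>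

locale conformal_variation =
  fixes \<epsilon> :: real and U :: "(real^'n::finite) set"
    and f :: "real^'n \<Rightarrow> real^'m::finite"
    and F :: "real \<Rightarrow> real^'n \<Rightarrow> real^'m"
    and \<gamma> :: "real \<Rightarrow> real^'n \<Rightarrow> real"
    and Nt :: "real \<Rightarrow> real^'n \<Rightarrow> real^'m"
  assumes dim: "CARD('m) = CARD('n) + 1"
    and imm: "immersion_on U f"
    and var: "conformal_inf_variation \<epsilon> U f F \<gamma>"
    and Nsmooth: "smooth_on ({-\<epsilon><..<\<epsilon>} \<times> U) (\<lambda>(t,x). Nt t x)"
    and Nnormal: "\<forall>t\<in>{-\<epsilon><..<\<epsilon>}. unit_normal_on U (F t) (Nt t)"
begin

definition \<Phi> :: "real \<times> (real^'n) \<Rightarrow> real^'m" where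
  "\<Phi> = (\<lambda>(t, y). F t y)"

definition \<Psi> :: "real \<times> (real^'n) \<Rightarrow> real^'m" where
  "\<Psi> = (\<lambda>(t, y). Nt t y)"

definition \<Gamma> :: "real \<times> (real^'n) \<Rightarrow> real" where
  "\<Gamma> = (\<lambda>(t, y). \<gamma> t y)"

definition T :: "real^'n \<Rightarrow> real^'m" where
  "T = (\<lambda>y. dt0 (\<lambda>t. F t y))"

definition \<rho> :: "real^'n \<Rightarrow> real" where
  "\<rho> = (\<lambda>y. - (1/2) * dt0 (\<lambda>t. \<gamma> t y))"

text \<open>The variation of the coefficients \<open>h\<^sub>l\<^sub>j = \<langle>N, \<partial>\<^sub>j\<partial>\<^sub>l f\<rangle>\<close> of the second fundamental form.\<close>
definition sff_velocity :: "real^'n \<Rightarrow> real^'n^'n" where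
  "sff_velocity x = (\<chi> l j. dt0 (\<lambda>t. Nt t x) \<bullet> pd j (pd l f) x + Nt 0 x \<bullet> pd j (pd l T) x)"

lemma open_U: "open U"
  using var unfolding conformal_inf_variation_def by blast

lemma zero_in_interval: "0 \<in> {-\<epsilon><..<\<epsilon>}"
  using var unfolding conformal_inf_variation_def by simp

lemma open_domain: "open ({-\<epsilon><..<\<epsilon>} \<times> U)"
  by (simp add: open_Times open_U)

lemma smooth_\<Phi>: "smooth_on ({-\<epsilon><..<\<epsilon>} \<times> U) \<Phi>"
  using var unfolding conformal_inf_variation_def \<Phi>_def by blast

lemma smooth_\<Psi>: "smooth_on ({-\<epsilon><..<\<epsilon>} \<times> U) \<Psi>"
  using Nsmooth unfolding \<Psi>_def .

lemma smooth_\<Gamma>: "smooth_on ({-\<epsilon><..<\<epsilon>} \<times> U) \<Gamma>"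
  using var unfolding conformal_inf_variation_def \<Gamma>_def by blast

lemma differentiable_at_domain:
  "smooth_on ({-\<epsilon><..<\<epsilon>} \<times> U) g \<Longrightarrow> t \<in> {-\<epsilon><..<\<epsilon>} \<Longrightarrow> y \<in> U \<Longrightarrow> g differentiable (at (t, y))"
  by (simp add: smooth_on_differentiable_at open_domain)

lemma smooth_F: "t \<in> {-\<epsilon><..<\<epsilon>} \<Longrightarrow> smooth_on U (F t)"
  using var unfolding conformal_inf_variation_def immersion_on_def by blast

lemma F_derivative_inj: "t \<in> {-\<epsilon><..<\<epsilon>} \<Longrightarrow> y \<in> U \<Longrightarrow> inj (frechet_derivative (F t) (at y))"
  using var unfolding conformal_inf_variation_def immersion_on_def by blast

lemma Nt_differentiable: "t \<in> {-\<epsilon><..<\<epsilon>} \<Longrightarrow> y \<in> U \<Longrightarrow> Nt t differentiable (at y)"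
  using space_slice_has_derivative[OF differentiable_at_domain[OF smooth_\<Psi>]]
  unfolding \<Psi>_def by (auto intro: differentiableI)

lemma Nt_unit: "t \<in> {-\<epsilon><..<\<epsilon>} \<Longrightarrow> y \<in> U \<Longrightarrow> Nt t y \<bullet> Nt t y = 1"
  using Nnormal unfolding unit_normal_on_def by (simp add: norm_eq_1)

lemma Nt_normal: "t \<in> {-\<epsilon><..<\<epsilon>} \<Longrightarrow> y \<in> U \<Longrightarrow> Nt t y \<bullet> pd i (F t) y = 0"
  using Nnormal unfolding unit_normal_on_def by blast

lemma pd_F: "t \<in> {-\<epsilon><..<\<epsilon>} \<Longrightarrow> y \<in> U \<Longrightarrow> pd i (F t) y = dir_deriv (space_dir i) \<Phi> (t, y)"
  using pd_space_slice[OF differentiable_at_domain[OF smooth_\<Phi>]] by (simp add: \<Phi>_def)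

lemma pd_pd_F:
  assumes "t \<in> {-\<epsilon><..<\<epsilon>}" "y \<in> U"
  shows "pd j (pd l (F t)) y = dir_deriv (space_dir j) (dir_deriv (space_dir l) \<Phi>) (t, y)"
proof -
  have "pd j (pd l (F t)) y = pd j (\<lambda>w. dir_deriv (space_dir l) \<Phi> (t, w)) y"
    using assms by (intro pd_cong_open[OF open_U]) (simp_all add: pd_F)
  also have "\<dots> = dir_deriv (space_dir j) (dir_deriv (space_dir l) \<Phi>) (t, y)"
    using assms by (intro pd_space_slice differentiable_at_domain smooth_on_dir_deriv smooth_\<Phi>
        space_dir_in_Basis)
  finally show ?thesis .
qed

lemma F0_eq_f: "y \<in> U \<Longrightarrow> F 0 y = f y"
  using var unfolding conformal_inf_variation_def by blast

lemma pd_f: "y \<in> U \<Longrightarrow> pd i f y = pd i (F 0) y"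
  by (rule pd_cong_open[OF open_U _ F0_eq_f[symmetric]])

lemma pd_pd_f: "y \<in> U \<Longrightarrow> pd j (pd l f) y = pd j (pd l (F 0)) y"
  by (rule pd_cong_open[OF open_U _ pd_f])

lemma F0_geometry:
  assumes "x \<in> U"
  shows "metric (F 0) x = metric f x" "metric_inv (F 0) x = metric_inv f x"
    "sff_matrix (F 0) N x = sff_matrix f N x" "shape_op (F 0) N x = shape_op f N x"
  using assms
  by (simp_all add: metric_def metric_inv_def sff_matrix_def shape_op_def pd_f pd_pd_f)

lemma has_vector_derivative_time_slice:
  "smooth_on ({-\<epsilon><..<\<epsilon>} \<times> U) g \<Longrightarrow> y \<in> U \<Longrightarrow>
    ((\<lambda>t. g (t, y)) has_vector_derivative dir_deriv time_dir g (0, y)) (at 0)"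
  by (intro time_slice_has_vector_derivative differentiable_at_domain zero_in_interval)

lemma dt0_time_slice:
  "smooth_on ({-\<epsilon><..<\<epsilon>} \<times> U) g \<Longrightarrow> y \<in> U \<Longrightarrow> dt0 (\<lambda>t. g (t, y)) = dir_deriv time_dir g (0, y)"
  unfolding dt0_def by (rule vector_derivative_at[OF has_vector_derivative_time_slice])

lemma dt0_Nt: "y \<in> U \<Longrightarrow> dt0 (\<lambda>t. Nt t y) = dir_deriv time_dir \<Psi> (0, y)"
  using dt0_time_slice[OF smooth_\<Psi>] by (simp add: \<Psi>_def)

lemma has_vector_derivative_\<gamma>: "y \<in> U \<Longrightarrow> ((\<lambda>t. \<gamma> t y) has_vector_derivative dt0 (\<lambda>t. \<gamma> t y)) (at 0)"
  using has_vector_derivative_time_slice[OF smooth_\<Gamma>] dt0_time_slice[OF smooth_\<Gamma>]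
  by (simp add: \<Gamma>_def)

lemma dir_deriv_time_space_commute:
  fixes g :: "real \<times> (real^'n) \<Rightarrow> 'b::euclidean_space"
  assumes "smooth_on ({-\<epsilon><..<\<epsilon>} \<times> U) g" "y \<in> U"
  shows "dir_deriv (space_dir i) (dir_deriv time_dir g) (0, y)
       = dir_deriv time_dir (dir_deriv (space_dir i) g) (0, y)"
  by (rule dir_deriv_commute[OF open_domain assms(1)])
    (use assms(2) zero_in_interval in \<open>simp_all add: time_dir_in_Basis space_dir_in_Basis\<close>)

lemma pd_T:
  assumes y: "y \<in> U"
  shows "pd l T y = dir_deriv time_dir (dir_deriv (space_dir l) \<Phi>) (0, y)"
proof -
  have "pd l T y = pd l (\<lambda>w. dir_deriv time_dir \<Phi> (0, w)) y"
    using dt0_time_slice[OF smooth_\<Phi>]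
    by (intro pd_cong_open[OF open_U y]) (simp add: T_def \<Phi>_def)
  also have "\<dots> = dir_deriv (space_dir l) (dir_deriv time_dir \<Phi>) (0, y)"
    using y by (intro pd_space_slice differentiable_at_domain smooth_on_dir_deriv smooth_\<Phi>
        time_dir_in_Basis zero_in_interval)
  also have "\<dots> = dir_deriv time_dir (dir_deriv (space_dir l) \<Phi>) (0, y)"
    by (rule dir_deriv_time_space_commute[OF smooth_\<Phi> y])
  finally show ?thesis .
qed

lemma pd_pd_T:
  assumes x: "x \<in> U"
  shows "pd j (pd l T) x = dir_deriv time_dir (dir_deriv (space_dir j) (dir_deriv (space_dir l) \<Phi>)) (0, x)"
proof -
  have smooth: "smooth_on ({-\<epsilon><..<\<epsilon>} \<times> U) (dir_deriv (space_dir l) \<Phi>)"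
    by (intro smooth_on_dir_deriv smooth_\<Phi> space_dir_in_Basis)
  have "pd j (pd l T) x = pd j (\<lambda>w. dir_deriv time_dir (dir_deriv (space_dir l) \<Phi>) (0, w)) x"
    by (intro pd_cong_open[OF open_U x]) (simp add: pd_T)
  also have "\<dots> = dir_deriv (space_dir j) (dir_deriv time_dir (dir_deriv (space_dir l) \<Phi>)) (0, x)"
    using x by (intro pd_space_slice differentiable_at_domain smooth_on_dir_deriv smooth
        time_dir_in_Basis zero_in_interval)
  also have "\<dots> = dir_deriv time_dir (dir_deriv (space_dir j) (dir_deriv (space_dir l) \<Phi>)) (0, x)"
    by (rule dir_deriv_time_space_commute[OF smooth x])
  finally show ?thesis .
qed

lemma \<Psi>_unit: "z \<in> {-\<epsilon><..<\<epsilon>} \<times> U \<Longrightarrow> \<Psi> z \<bullet> \<Psi> z = 1"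
  by (auto simp: \<Psi>_def Nt_unit)

lemma \<Psi>_normal: "z \<in> {-\<epsilon><..<\<epsilon>} \<times> U \<Longrightarrow> \<Psi> z \<bullet> dir_deriv (space_dir i) \<Phi> z = 0"
  by (auto simp: \<Psi>_def Nt_normal simp flip: pd_F)

lemma dt0_Nt_tangent:
  assumes x: "x \<in> U"
  shows "dt0 (\<lambda>t. Nt t x) \<bullet> Nt 0 x = 0"
proof -
  have x0: "(0, x) \<in> {-\<epsilon><..<\<epsilon>} \<times> U" using x zero_in_interval by simp
  have "dir_deriv time_dir \<Psi> (0, x) \<bullet> \<Psi> (0, x) + \<Psi> (0, x) \<bullet> dir_deriv time_dir \<Psi> (0, x) = 0"
    by (rule dir_deriv_inner_const[OF open_domain x0 _ _ \<Psi>_unit])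
      (use x zero_in_interval in \<open>simp_all add: differentiable_at_domain smooth_\<Psi>\<close>)
  then show ?thesis using x by (simp add: dt0_Nt \<Psi>_def inner_commute)
qed

lemma pd_T_normal:
  assumes x: "x \<in> U"
  shows "pd m T x \<bullet> Nt 0 x = - (dt0 (\<lambda>t. Nt t x) \<bullet> pd m f x)"
proof -
  have x0: "(0, x) \<in> {-\<epsilon><..<\<epsilon>} \<times> U" using x zero_in_interval by simp
  have "dir_deriv time_dir \<Psi> (0, x) \<bullet> dir_deriv (space_dir m) \<Phi> (0, x)
      + \<Psi> (0, x) \<bullet> dir_deriv time_dir (dir_deriv (space_dir m) \<Phi>) (0, x) = 0"
    by (rule dir_deriv_inner_const[OF open_domain x0 _ _ \<Psi>_normal])
      (use x zero_in_interval in \<open>simp_all add: differentiable_at_domain smooth_\<Psi> smooth_\<Phi>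
        smooth_on_dir_deriv space_dir_in_Basis\<close>)
  then show ?thesis
    using x zero_in_interval by (simp add: dt0_Nt pd_T pd_f pd_F \<Psi>_def inner_commute)
qed

lemma metric_F_invertible: "t \<in> {-\<epsilon><..<\<epsilon>} \<Longrightarrow> x \<in> U \<Longrightarrow> invertible (metric (F t) x)"
  by (intro metric_invertible F_derivative_inj smooth_on_differentiable_at[OF smooth_F open_U])

lemma metric_entry_differentiable:
  assumes x: "x \<in> U"
  shows "\<exists>d. ((\<lambda>t. metric (F t) x $ i $ j) has_vector_derivative d) (at 0)"
proof -
  define P where "P z = dir_deriv (space_dir i) \<Phi> z \<bullet> dir_deriv (space_dir j) \<Phi> z" for z
  have "P differentiable (at (0, x))"
    unfolding P_def using x zero_in_interval
    by (intro differentiable_inner differentiable_at_domain smooth_on_dir_deriv smooth_\<Phi>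
        space_dir_in_Basis) auto
  from time_slice_has_vector_derivative[OF this]
  have "((\<lambda>t. metric (F t) x $ i $ j) has_vector_derivative dir_deriv time_dir P (0, x)) (at 0)"
    by (rule has_vector_derivative_transform_within_open[OF _ open_greaterThanLessThan zero_in_interval])
      (simp add: P_def metric_def pd_F x)
  then show ?thesis by blast
qed

text \<open>Differentiating \<open>\<gamma> g\<^sub>t = const\<close> at \<open>t = 0\<close>, where \<open>\<gamma> = 1\<close>.\<close>
lemma metric_has_derivative:
  assumes x: "x \<in> U"
  shows "((\<lambda>t. metric (F t) x) has_vector_derivative (- dt0 (\<lambda>t. \<gamma> t x)) *\<^sub>R metric f x) (at 0)"
proof (intro has_vector_derivative_vec_lambda)
  fix i j
  obtain d where d: "((\<lambda>t. metric (F t) x $ i $ j) has_vector_derivative d) (at 0)"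
    using metric_entry_differentiable[OF x] by blast
  have "((\<lambda>t. \<gamma> t x * metric (F t) x $ i $ j) has_vector_derivative
      \<gamma> 0 x * d + dt0 (\<lambda>t. \<gamma> t x) * metric (F 0) x $ i $ j) (at 0)"
    by (rule has_vector_derivative_mult[OF has_vector_derivative_\<gamma>[OF x] d])
  moreover have "dt0 (\<lambda>t. \<gamma> t x * metric (F t) x $ i $ j) = 0" "\<gamma> 0 x = 1"
    using var x unfolding conformal_inf_variation_def metric_def by auto
  ultimately have "d + dt0 (\<lambda>t. \<gamma> t x) * metric f x $ i $ j = 0"
    using x vector_derivative_at unfolding dt0_def by (fastforce simp: F0_geometry)
  then have "d = ((- dt0 (\<lambda>t. \<gamma> t x)) *\<^sub>R metric f x) $ i $ j" by simp
  with d show "((\<lambda>t. metric (F t) x $ i $ j) has_vector_derivative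
      ((- dt0 (\<lambda>t. \<gamma> t x)) *\<^sub>R metric f x) $ i $ j) (at 0)"
    by simp
qed

lemma metric_inv_has_derivative:
  assumes x: "x \<in> U"
  shows "((\<lambda>t. metric_inv (F t) x) has_vector_derivative dt0 (\<lambda>t. \<gamma> t x) *\<^sub>R metric_inv f x) (at 0)"
proof -
  define G X where "G = metric f x" and "X = metric_inv f x"
  have "invertible G" unfolding G_def using metric_F_invertible[OF zero_in_interval x] x
    by (simp add: F0_geometry)
  then have "G ** X = mat 1" unfolding X_def G_def metric_inv_def by (rule matrix_inv_right)
  have "((\<lambda>t. metric_inv (F t) x) has_vector_derivative
      - (X ** ((- dt0 (\<lambda>t. \<gamma> t x)) *\<^sub>R G) ** X)) (at 0)"
    using has_vector_derivative_matrix_inv[OF open_greaterThanLessThan zero_in_interval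
        metric_F_invertible[OF _ x] metric_has_derivative[OF x]] x
    unfolding metric_inv_def X_def G_def by (simp add: F0_geometry)
  also have "- (X ** ((- dt0 (\<lambda>t. \<gamma> t x)) *\<^sub>R G) ** X) = dt0 (\<lambda>t. \<gamma> t x) *\<^sub>R X"
  proof -
    have "X ** ((- dt0 (\<lambda>t. \<gamma> t x)) *\<^sub>R G) ** X = (- dt0 (\<lambda>t. \<gamma> t x)) *\<^sub>R X"
      by (simp only: matrix_scalar_ac \<open>G ** X = mat 1\<close> matrix_mul_rid
          flip: scalar_matrix_assoc matrix_mul_assoc)
    then show ?thesis by simp
  qed
  finally show ?thesis unfolding X_def .
qed

lemma sff_matrix_has_derivative:
  assumes x: "x \<in> U"
  shows "((\<lambda>t. sff_matrix (F t) (Nt t) x) has_vector_derivative sff_velocity x) (at 0)"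
proof (intro has_vector_derivative_vec_lambda)
  fix l j
  define H where "H = dir_deriv (space_dir j) (dir_deriv (space_dir l) \<Phi>)"
  have "smooth_on ({-\<epsilon><..<\<epsilon>} \<times> U) H"
    unfolding H_def by (intro smooth_on_dir_deriv smooth_\<Phi> space_dir_in_Basis)
  from bounded_bilinear.has_vector_derivative[OF bounded_bilinear_inner
      has_vector_derivative_time_slice[OF smooth_\<Psi> x] has_vector_derivative_time_slice[OF this x]]
  have "((\<lambda>t. \<Psi> (t, x) \<bullet> H (t, x)) has_vector_derivative
      \<Psi> (0, x) \<bullet> dir_deriv time_dir H (0, x) + dir_deriv time_dir \<Psi> (0, x) \<bullet> H (0, x)) (at 0)" .
  then have "((\<lambda>t. sff_matrix (F t) (Nt t) x $ l $ j) has_vector_derivative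
      \<Psi> (0, x) \<bullet> dir_deriv time_dir H (0, x) + dir_deriv time_dir \<Psi> (0, x) \<bullet> H (0, x)) (at 0)"
    by (rule has_vector_derivative_transform_within_open[OF _ open_greaterThanLessThan zero_in_interval])
      (simp add: sff_matrix_def H_def \<Psi>_def pd_pd_F x)
  then show "((\<lambda>t. sff_matrix (F t) (Nt t) x $ l $ j) has_vector_derivative sff_velocity x $ l $ j) (at 0)"
    using x zero_in_interval
    by (simp add: sff_velocity_def H_def \<Psi>_def dt0_Nt pd_pd_T pd_pd_f pd_pd_F add.commute)
qed

lemma shape_op_F:
  assumes "t \<in> {-\<epsilon><..<\<epsilon>}" "x \<in> U"
  shows "shape_op (F t) (Nt t) x = metric_inv (F t) x ** sff_matrix (F t) (Nt t) x"
  using assms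
  by (intro weingarten_formula[OF open_U] Nt_differentiable Nt_normal
      smooth_on_differentiable_at[OF smooth_on_pd[OF smooth_F] open_U])

lemma shape_op_f: "x \<in> U \<Longrightarrow> shape_op f (Nt 0) x = metric_inv f x ** sff_matrix f (Nt 0) x"
  using shape_op_F[OF zero_in_interval] by (simp add: F0_geometry)

lemma dt0_shape_op:
  assumes x: "x \<in> U"
  shows "dt0 (\<lambda>t. shape_op (F t) (Nt t) x)
       = dt0 (\<lambda>t. \<gamma> t x) *\<^sub>R shape_op f (Nt 0) x + metric_inv f x ** sff_velocity x"
proof -
  have "((\<lambda>t. metric_inv (F t) x ** sff_matrix (F t) (Nt t) x) has_vector_derivative
      metric_inv (F 0) x ** sff_velocity x + (dt0 (\<lambda>t. \<gamma> t x) *\<^sub>R metric_inv f x) ** sff_matrix (F 0) (Nt 0) x)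
      (at 0)"
    by (rule has_vector_derivative_matrix_mult[OF metric_inv_has_derivative[OF x]
          sff_matrix_has_derivative[OF x]])
  moreover have "metric_inv (F 0) x ** sff_velocity x
      + (dt0 (\<lambda>t. \<gamma> t x) *\<^sub>R metric_inv f x) ** sff_matrix (F 0) (Nt 0) x
      = dt0 (\<lambda>t. \<gamma> t x) *\<^sub>R shape_op f (Nt 0) x + metric_inv f x ** sff_velocity x"
    using x by (simp add: shape_op_f F0_geometry add.commute flip: scalar_matrix_assoc)
  ultimately have "((\<lambda>t. metric_inv (F t) x ** sff_matrix (F t) (Nt t) x) has_vector_derivative
      dt0 (\<lambda>t. \<gamma> t x) *\<^sub>R shape_op f (Nt 0) x + metric_inv f x ** sff_velocity x) (at 0)"
    by simp
  then have "((\<lambda>t. shape_op (F t) (Nt t) x) has_vector_derivative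
      dt0 (\<lambda>t. \<gamma> t x) *\<^sub>R shape_op f (Nt 0) x + metric_inv f x ** sff_velocity x) (at 0)"
    by (rule has_vector_derivative_transform_within_open[OF _ open_greaterThanLessThan zero_in_interval])
      (use x in \<open>simp add: shape_op_F\<close>)
  then show ?thesis unfolding dt0_def by (rule vector_derivative_at)
qed

text \<open>By the Gauss formula, since \<open>N'\<close> is tangent and \<open>\<langle>\<partial>\<^sub>m T, N\<rangle> = -\<langle>N', \<partial>\<^sub>m f\<rangle>\<close>.\<close>
lemma christoffel_T_normal:
  assumes x: "x \<in> U"
  shows "(\<Sum>m\<in>UNIV. christoffel f x m i j * (pd m T x \<bullet> Nt 0 x))
       = - (dt0 (\<lambda>t. Nt t x) \<bullet> pd i (pd j f) x)"
proof -
  have "pd i (pd j f) x = sff f (Nt 0) x i j + (\<Sum>m\<in>UNIV. christoffel f x m i j *\<^sub>R pd m f x)"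
  proof (rule gauss_formula[OF dim])
    show "f differentiable (at x)" "inj (frechet_derivative f (at x))"
      using imm x unfolding immersion_on_def by (auto intro: smooth_on_differentiable_at)
    show "Nt 0 x \<bullet> Nt 0 x = 1" "Nt 0 x \<bullet> pd k f x = 0" for k
      using x zero_in_interval by (simp_all add: Nt_unit Nt_normal pd_f)
  qed
  from arg_cong[OF this, of "\<lambda>v. dt0 (\<lambda>t. Nt t x) \<bullet> v"]
  have "dt0 (\<lambda>t. Nt t x) \<bullet> pd i (pd j f) x
      = (\<Sum>m\<in>UNIV. christoffel f x m i j * (dt0 (\<lambda>t. Nt t x) \<bullet> pd m f x))"
    using dt0_Nt_tangent[OF x] by (simp add: sff_def inner_add_right inner_sum_right)
  then show ?thesis
    by (simp add: pd_T_normal[OF x] sum_negf)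
qed

lemma beta_tensor_normal:
  assumes x: "x \<in> U"
  shows "beta_tensor f (Nt 0) T \<rho> x i j \<bullet> Nt 0 x
       = sff_velocity x $ j $ i - \<rho> x * sff_matrix f (Nt 0) x $ j $ i"
proof -
  have "Nt 0 x \<bullet> Nt 0 x = 1" using x zero_in_interval by (simp add: Nt_unit)
  then have "beta_tensor f (Nt 0) T \<rho> x i j \<bullet> Nt 0 x
      = pd i (pd j T) x \<bullet> Nt 0 x - (\<Sum>m\<in>UNIV. christoffel f x m i j * (pd m T x \<bullet> Nt 0 x))
        - \<rho> x * (pd i (pd j f) x \<bullet> Nt 0 x)"
    by (simp add: beta_tensor_def sff_def inner_diff_left inner_sum_left)
  then show ?thesis
    by (simp add: christoffel_T_normal[OF x] sff_velocity_def sff_matrix_def inner_commute[of "Nt 0 x"])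
qed

lemma B_tensor_eq:
  "x \<in> U \<Longrightarrow> B_tensor f (Nt 0) T \<rho> x = metric_inv f x ** (sff_velocity x - \<rho> x *\<^sub>R sff_matrix f (Nt 0) x)"
  by (simp add: B_tensor_def matrix_matrix_mult_def beta_tensor_normal vec_eq_iff)

lemma B_tensor_eq_shape_op_derivative:
  assumes x: "x \<in> U"
  shows "B_tensor f (Nt 0) T \<rho> x = dt0 (\<lambda>t. shape_op (F t) (Nt t) x) + \<rho> x *\<^sub>R shape_op f (Nt 0) x"
proof -
  have "B_tensor f (Nt 0) T \<rho> x = metric_inv f x ** sff_velocity x - \<rho> x *\<^sub>R shape_op f (Nt 0) x"
    using x by (simp add: B_tensor_eq shape_op_f matrix_diff_ldistrib matrix_scalar_ac
        flip: scalar_matrix_assoc)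
  also have "\<dots> = dt0 (\<lambda>t. shape_op (F t) (Nt t) x) + \<rho> x *\<^sub>R shape_op f (Nt 0) x"
    using x by (simp add: dt0_shape_op \<rho>_def algebra_simps flip: scaleR_add_left)
  finally show ?thesis .
qed

end

theorem mainTheorem5:
  fixes \<epsilon> :: real and U :: "(real^'n::finite) set"
    and f :: "real^'n \<Rightarrow> real^'m::finite"
    and F :: "real \<Rightarrow> real^'n \<Rightarrow> real^'m"
    and \<gamma> :: "real \<Rightarrow> real^'n \<Rightarrow> real"
    and Nt :: "real \<Rightarrow> real^'n \<Rightarrow> real^'m"
  assumes dim: "CARD('m) = CARD('n) + 1"
    and imm: "immersion_on U f"
    and var: "conformal_inf_variation \<epsilon> U f F \<gamma>"
    and Nsmooth: "smooth_on ({-\<epsilon><..<\<epsilon>} \<times> U) (\<lambda>(t,x). Nt t x)"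
    and Nnormal: "\<forall>t\<in>{-\<epsilon><..<\<epsilon>}. unit_normal_on U (F t) (Nt t)"
  shows "\<forall>x\<in>U.
           B_tensor f (Nt 0) (\<lambda>y. dt0 (\<lambda>t. F t y)) (\<lambda>y. - (1/2) * dt0 (\<lambda>t. \<gamma> t y)) x
           = dt0 (\<lambda>t. shape_op (F t) (Nt t) x)
             + (- (1/2) * dt0 (\<lambda>t. \<gamma> t x)) *\<^sub>R shape_op f (Nt 0) x"
proof -
  interpret conformal_variation \<epsilon> U f F \<gamma> Nt
    using dim imm var Nsmooth Nnormal by unfold_locales
  show ?thesis
    using B_tensor_eq_shape_op_derivative unfolding T_def \<rho>_def by blast
qed

end
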